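(* Let $(L,\preceq)$ be a lattice with meet $\wedge$ and join $\vee$, and let $\delta$ be an equivalence relation on $L$. Then $\delta$ is a local congruence on $L$ if and only if, for all $a,b,c\in L$, the following two properties hold: (i) if $(a,b)\in\delta$ and $a\preceq c\preceq b$, then $(a,c)\in\delta$; (ii) $(a,b)\in\delta$ if and only if $(a\wedge b,\,a\vee b)\in\delta$.
   Context: For an equivalence relation $\delta$ on a set $L$, $[a]_\delta=\{b\in L\mid (a,b)\in\delta\}$ denotes the equivalence class of $a$. Given a lattice $(L,\preceq)$, an equivalence relation $\delta$ on $L$ is called a local congruence if (i) each equivalence class of $\delta$ is a sublattice of $L$ (closed under $\wedge$ and $\vee$ of $L$), and (ii) each equivalence class of $\delta$ is convex (if $x,y$ belong to the class and $x\preceq z\preceq y$ with $z\in L$, then $z$ belongs to the class). *)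

theory Defs
  imports Main
begin

definition eq_class :: "('a \<times> 'a) set \<Rightarrow> 'a \<Rightarrow> 'a set" where
  "eq_class \<delta> a = {b. (a, b) \<in> \<delta>}"

definition local_congruence :: "('a::lattice \<times> 'a) set \<Rightarrow> bool" where
  "local_congruence \<delta> \<longleftrightarrow> equiv UNIV \<delta> \<and>
     (\<forall>a. \<forall>x\<in>eq_class \<delta> a. \<forall>y\<in>eq_class \<delta> a. inf x y \<in> eq_class \<delta> a \<and> sup x y \<in> eq_class \<delta> a) \<and>
     (\<forall>a. \<forall>x\<in>eq_class \<delta> a. \<forall>y\<in>eq_class \<delta> a. \<forall>z. x \<le> z \<and> z \<le> y \<longrightarrow> z \<in> eq_class \<delta> a)"

end

theory Submission
  imports Defs
begin

text \<open>For an equivalence relation two elements share a class iff they are related, so the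
  class conditions become conditions on related pairs: every element is related to its meet
  and its join with any related element, and to everything in between. Given convexity, the
  first of these is equivalent to \<open>inf x y\<close> being related to \<open>sup x y\<close>, because the
  interval between them contains \<open>x\<close> and \<open>y\<close>.\<close>

lemma eq_classes_closed_iff:
  assumes "equiv UNIV \<delta>"
  shows "(\<forall>a. \<forall>x\<in>eq_class \<delta> a. \<forall>y\<in>eq_class \<delta> a. f x y \<in> eq_class \<delta> a)
    \<longleftrightarrow> (\<forall>x y. (x, y) \<in> \<delta> \<longrightarrow> (x, f x y) \<in> \<delta>)" (is "?classes \<longleftrightarrow> ?pairs")
proof
  assume ?classes
  show ?pairs
  proof (intro allI impI)
    fix x y
    assume "(x, y) \<in> \<delta>"
    with assms have "x \<in> eq_class \<delta> x" "y \<in> eq_class \<delta> x"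
      by (simp_all add: eq_class_def equiv_def refl_on_def)
    with \<open>?classes\<close> have "f x y \<in> eq_class \<delta> x"
      by blast
    then show "(x, f x y) \<in> \<delta>"
      by (simp add: eq_class_def)
  qed
next
  assume ?pairs
  show ?classes
  proof (intro allI ballI)
    fix a x y
    assume "x \<in> eq_class \<delta> a" "y \<in> eq_class \<delta> a"
    with assms have "(a, x) \<in> \<delta>" "(x, y) \<in> \<delta>"
      by (auto simp: eq_class_def equiv_def dest: symD elim: transE)
    with \<open>?pairs\<close> assms show "f x y \<in> eq_class \<delta> a"
      by (auto simp: eq_class_def equiv_def elim: transE)
  qed
qed

lemma eq_classes_convex_iff:
  fixes \<delta> :: "('a::ord \<times> 'a) set"
  assumes "equiv UNIV \<delta>"
  shows "(\<forall>a. \<forall>x\<in>eq_class \<delta> a. \<forall>y\<in>eq_class \<delta> a. \<forall>z. x \<le> z \<and> z \<le> y \<longrightarrow> z \<in> eq_class \<delta> a)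
    \<longleftrightarrow> (\<forall>x y z. (x, y) \<in> \<delta> \<and> x \<le> z \<and> z \<le> y \<longrightarrow> (x, z) \<in> \<delta>)"
    (is "?classes \<longleftrightarrow> ?pairs")
proof
  assume ?classes
  show ?pairs
  proof (intro allI impI)
    fix x y z
    assume "(x, y) \<in> \<delta> \<and> x \<le> z \<and> z \<le> y"
    with assms have "x \<in> eq_class \<delta> x" "y \<in> eq_class \<delta> x" "x \<le> z \<and> z \<le> y"
      by (simp_all add: eq_class_def equiv_def refl_on_def)
    with \<open>?classes\<close> have "z \<in> eq_class \<delta> x"
      by blast
    then show "(x, z) \<in> \<delta>"
      by (simp add: eq_class_def)
  qed
next
  assume ?pairs
  show ?classes
  proof (intro allI ballI impI)
    fix a x y z
    assume "x \<in> eq_class \<delta> a" "y \<in> eq_class \<delta> a" "x \<le> z \<and> z \<le> y"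
    with assms have "(a, x) \<in> \<delta>" "(x, y) \<in> \<delta>"
      by (auto simp: eq_class_def equiv_def dest: symD elim: transE)
    with \<open>?pairs\<close> \<open>x \<le> z \<and> z \<le> y\<close> assms show "z \<in> eq_class \<delta> a"
      by (auto simp: eq_class_def equiv_def elim: transE)
  qed
qed

lemma local_congruence_iff_related:
  fixes \<delta> :: "('a::lattice \<times> 'a) set"
  assumes "equiv UNIV \<delta>"
  shows "local_congruence \<delta> \<longleftrightarrow>
    (\<forall>x y. (x, y) \<in> \<delta> \<longrightarrow> (x, inf x y) \<in> \<delta> \<and> (x, sup x y) \<in> \<delta>) \<and>
    (\<forall>x y z. (x, y) \<in> \<delta> \<and> x \<le> z \<and> z \<le> y \<longrightarrow> (x, z) \<in> \<delta>)"
  unfolding local_congruence_def ball_conj_distrib all_conj_distrib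
    eq_classes_closed_iff[OF assms] eq_classes_convex_iff[OF assms]
  using assms by blast

lemma closed_meet_join_iff_meet_join_related:
  fixes \<delta> :: "('a::lattice \<times> 'a) set"
  assumes "equiv UNIV \<delta>"
    and convex: "\<forall>a b c. (a, b) \<in> \<delta> \<and> a \<le> c \<and> c \<le> b \<longrightarrow> (a, c) \<in> \<delta>"
  shows "(\<forall>x y. (x, y) \<in> \<delta> \<longrightarrow> (x, inf x y) \<in> \<delta> \<and> (x, sup x y) \<in> \<delta>)
    \<longleftrightarrow> (\<forall>x y. (x, y) \<in> \<delta> \<longleftrightarrow> (inf x y, sup x y) \<in> \<delta>)"
proof -
  have related_sym: "(x, y) \<in> \<delta> \<Longrightarrow> (y, x) \<in> \<delta>" for x y
    using assms(1) by (meson equiv_def symD)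
  have related_trans: "(x, y) \<in> \<delta> \<Longrightarrow> (y, z) \<in> \<delta> \<Longrightarrow> (x, z) \<in> \<delta>" for x y z
    using assms(1) by (meson equiv_def transD)
  have bounds_related: "(inf x y, x) \<in> \<delta>" "(inf x y, y) \<in> \<delta>"
    if "(inf x y, sup x y) \<in> \<delta>" for x y
    using convex that by (meson inf_le1 inf_le2 sup_ge1 sup_ge2)+
  show ?thesis
  proof
    assume closed: "\<forall>x y. (x, y) \<in> \<delta> \<longrightarrow> (x, inf x y) \<in> \<delta> \<and> (x, sup x y) \<in> \<delta>"
    show "\<forall>x y. (x, y) \<in> \<delta> \<longleftrightarrow> (inf x y, sup x y) \<in> \<delta>"
    proof (intro allI iffI)
      fix x y
      assume "(x, y) \<in> \<delta>"
      with closed have "(x, inf x y) \<in> \<delta>" "(x, sup x y) \<in> \<delta>"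
        by blast+
      then show "(inf x y, sup x y) \<in> \<delta>"
        by (blast intro: related_sym related_trans)
    next
      fix x y
      assume "(inf x y, sup x y) \<in> \<delta>"
      then show "(x, y) \<in> \<delta>"
        using bounds_related by (blast intro: related_sym related_trans)
    qed
  next
    assume meet_join: "\<forall>x y. (x, y) \<in> \<delta> \<longleftrightarrow> (inf x y, sup x y) \<in> \<delta>"
    show "\<forall>x y. (x, y) \<in> \<delta> \<longrightarrow> (x, inf x y) \<in> \<delta> \<and> (x, sup x y) \<in> \<delta>"
    proof (intro allI impI)
      fix x y
      assume "(x, y) \<in> \<delta>"
      with meet_join have "(inf x y, sup x y) \<in> \<delta>"
        by blast
      with bounds_related have "(x, inf x y) \<in> \<delta>"
        by (blast intro: related_sym)
      with \<open>(inf x y, sup x y) \<in> \<delta>\<close> show "(x, inf x y) \<in> \<delta> \<and> (x, sup x y) \<in> \<delta>"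
        by (blast intro: related_trans)
    qed
  qed
qed

theorem proposition3p4:
  fixes \<delta> :: "('a::lattice \<times> 'a) set"
  assumes "equiv UNIV \<delta>"
  shows "local_congruence \<delta> \<longleftrightarrow>
    (\<forall>a b c. ((a, b) \<in> \<delta> \<and> a \<le> c \<and> c \<le> b \<longrightarrow> (a, c) \<in> \<delta>) \<and>
             ((a, b) \<in> \<delta> \<longleftrightarrow> (inf a b, sup a b) \<in> \<delta>))"
proof -
  let ?convex = "\<forall>a b c. (a, b) \<in> \<delta> \<and> a \<le> c \<and> c \<le> b \<longrightarrow> (a, c) \<in> \<delta>"
  let ?meet_join = "\<forall>a b. (a, b) \<in> \<delta> \<longleftrightarrow> (inf a b, sup a b) \<in> \<delta>"
  have "local_congruence \<delta> \<longleftrightarrow> ?convex \<and> ?meet_join"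
    using local_congruence_iff_related[OF assms]
      closed_meet_join_iff_meet_join_related[OF assms] by blast
  then show ?thesis
    by (simp add: all_conj_distrib)
qed

end
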